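(* For every $V\ge 0$, $T>0$ and $\bar P>0$, the capacity region $\mathcal{C}(V,T,\bar P)$ of the UAV-enabled two-user broadcast channel is symmetric with respect to the line $r_1=r_2$; that is, $(r_1,r_2)\in\mathcal{C}(V,T,\bar P)$ if and only if $(r_2,r_1)\in\mathcal{C}(V,T,\bar P)$.
   Context: Fix $D>0$, $H>0$, $\beta_0>0$, $\bar P>0$. Two ground users GU 1 and GU 2 are at horizontal positions $x_1=-D/2$ and $x_2=D/2$. For a UAV horizontal position $x\in\mathbb{R}$ (the UAV flies at constant altitude $H$), the normalized channel gains are $h_k(x)=\beta_0/((x-x_k)^2+H^2)$, $k\in\{1,2\}$. Given a flight duration $T>0$ and maximum speed $V\ge 0$, a feasible trajectory is a function $x:[0,T]\to\mathbb{R}$ with $|\dot x(t)|\le V$ for all $t\in[0,T]$ (i.e. $x$ is $V$-Lipschitz), and a feasible power allocation is a pair of measurable functions $p_1,p_2:[0,T]\to[0,\infty)$ with $p_1(t)+p_2(t)\le\bar P$ for all $t$. For such $x,p$, let $\mathcal{C}(x,p)$ be the set of rate pairs $(r_1,r_2)$ with $r_1,r_2\ge 0$ and $r_1\le\frac1T\int_0^T\log_2(1+p_1(t)h_1(x(t)))\,dt$, $r_2\le\frac1T\int_0^T\log_2(1+p_2(t)h_2(x(t)))\,dt$, $r_1+r_2\le\frac1T\int_0^T\log_2(1+p_1(t)h_1(x(t))+p_2(t)h_2(x(t)))\,dt$. The capacity region is $\mathcal{C}(V,T,\bar P)=\bigcup\mathcal{C}(x,p)$, the union over all feasible trajectories $x$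 and feasible power allocations $p$. *)

theory Defs
  imports "HOL-Analysis.Analysis"
begin

text \<open>Ground user positions x_1 = -D/2, x_2 = D/2 and normalized channel gains.\<close>

definition gain :: "real \<Rightarrow> real \<Rightarrow> real \<Rightarrow> real \<Rightarrow> real \<Rightarrow> real" where
  "gain D H \<beta>0 xk x = \<beta>0 / ((x - xk)\<^sup>2 + H\<^sup>2)"

definition h1 :: "real \<Rightarrow> real \<Rightarrow> real \<Rightarrow> real \<Rightarrow> real" where
  "h1 D H \<beta>0 x = gain D H \<beta>0 (- D / 2) x"

definition h2 :: "real \<Rightarrow> real \<Rightarrow> real \<Rightarrow> real \<Rightarrow> real" where
  "h2 D H \<beta>0 x = gain D H \<beta>0 (D / 2) x"

definition feasible_traj :: "real \<Rightarrow> real \<Rightarrow> (real \<Rightarrow> real) \<Rightarrow> bool" where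
  "feasible_traj V T x \<longleftrightarrow>
     (\<forall>s\<in>{0..T}. \<forall>t\<in>{0..T}. \<bar>x s - x t\<bar> \<le> V * \<bar>s - t\<bar>)"

definition feasible_power :: "real \<Rightarrow> real \<Rightarrow> (real \<Rightarrow> real) \<Rightarrow> (real \<Rightarrow> real) \<Rightarrow> bool" where
  "feasible_power T Pbar p1 p2 \<longleftrightarrow>
     p1 \<in> borel_measurable lborel \<and> p2 \<in> borel_measurable lborel \<and>
     (\<forall>t\<in>{0..T}. 0 \<le> p1 t \<and> 0 \<le> p2 t \<and> p1 t + p2 t \<le> Pbar)"

definition avg :: "real \<Rightarrow> (real \<Rightarrow> real) \<Rightarrow> real" where
  "avg T f = (1 / T) * (LINT t:{0..T}|lborel. f t)"

definition rate_region ::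
  "real \<Rightarrow> real \<Rightarrow> real \<Rightarrow> real \<Rightarrow> (real \<Rightarrow> real) \<Rightarrow> (real \<Rightarrow> real) \<Rightarrow> (real \<Rightarrow> real)
     \<Rightarrow> (real \<times> real) set" where
  "rate_region D H \<beta>0 T x p1 p2 = {(r1, r2). 0 \<le> r1 \<and> 0 \<le> r2 \<and>
     r1 \<le> avg T (\<lambda>t. log 2 (1 + p1 t * h1 D H \<beta>0 (x t))) \<and>
     r2 \<le> avg T (\<lambda>t. log 2 (1 + p2 t * h2 D H \<beta>0 (x t))) \<and>
     r1 + r2 \<le> avg T (\<lambda>t. log 2 (1 + p1 t * h1 D H \<beta>0 (x t) + p2 t * h2 D H \<beta>0 (x t)))}"

definition capacity_region :: "real \<Rightarrow> real \<Rightarrow> real \<Rightarrow> real \<Rightarrow> real \<Rightarrow> real \<Rightarrow> (real \<times> real) set" where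
  "capacity_region D H \<beta>0 V T Pbar =
     (\<Union>{rate_region D H \<beta>0 T x p1 p2 | x p1 p2.
         feasible_traj V T x \<and> feasible_power T Pbar p1 p2})"

end

theory Submission
  imports Defs
begin

text \<open>Mirroring the trajectory through the origin swaps the roles of the two users, since
  h1 (-x) = h2 x; together with swapping the two power allocations this maps every achievable
  rate region onto its reflection in the line r1 = r2.\<close>

lemma h1_minus: "h1 D H \<beta>0 (- y) = h2 D H \<beta>0 y"
  and h2_minus: "h2 D H \<beta>0 (- y) = h1 D H \<beta>0 y"
  unfolding h1_def h2_def gain_def by (simp_all add: power2_eq_square algebra_simps)

lemma feasible_traj_uminus:
  "feasible_traj V T x \<Longrightarrow> feasible_traj V T (\<lambda>t. - x t)"
  unfolding feasible_traj_def by (metis abs_minus_commute minus_diff_eq minus_diff_minus)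

lemma feasible_power_commute:
  "feasible_power T Pbar p1 p2 \<Longrightarrow> feasible_power T Pbar p2 p1"
  unfolding feasible_power_def by (auto simp: add.commute)

lemma rate_region_swap:
  "(r1, r2) \<in> rate_region D H \<beta>0 T x p1 p2 \<Longrightarrow>
   (r2, r1) \<in> rate_region D H \<beta>0 T (\<lambda>t. - x t) p2 p1"
  unfolding rate_region_def by (simp add: h1_minus h2_minus add.commute add.left_commute)

lemma capacity_region_swap:
  assumes "(r1, r2) \<in> capacity_region D H \<beta>0 V T Pbar"
  shows "(r2, r1) \<in> capacity_region D H \<beta>0 V T Pbar"
proof -
  from assms obtain x p1 p2 where "feasible_traj V T x" "feasible_power T Pbar p1 p2"
    and "(r1, r2) \<in> rate_region D H \<beta>0 T x p1 p2"
    unfolding capacity_region_def by blast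
  then have "feasible_traj V T (\<lambda>t. - x t)" "feasible_power T Pbar p2 p1"
    and "(r2, r1) \<in> rate_region D H \<beta>0 T (\<lambda>t. - x t) p2 p1"
    by (simp_all add: feasible_traj_uminus feasible_power_commute rate_region_swap)
  then show ?thesis
    unfolding capacity_region_def by blast
qed

theorem lemma1:
  fixes D H \<beta>0 Pbar V T r1 r2 :: real
  assumes "D > 0" and "H > 0" and "\<beta>0 > 0" and "Pbar > 0"
    and "V \<ge> 0" and "T > 0"
  shows "(r1, r2) \<in> capacity_region D H \<beta>0 V T Pbar \<longleftrightarrow>
         (r2, r1) \<in> capacity_region D H \<beta>0 V T Pbar"
  using capacity_region_swap by blast

end
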